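(* Let $m\ge 2$ and $\theta_c(\mathrm{Plu},m)=\frac{m-2}{3m-2}$. For $\theta\in(0,1]$: (i) if $\theta<\theta_c(\mathrm{Plu},m)$ then $\lim_{n\to\infty}\rho(\mathrm{Plu},m,n,\theta)=1$; (ii) if $\theta>\theta_c(\mathrm{Plu},m)$ then $\lim_{n\to\infty}\rho(\mathrm{Plu},m,n,\theta)=0$.
   Context: A ranking is a strict total order on the candidates. A discrete profile $P$ consists of candidates, $n$ voters, and a ranking $P_v$ per voter. Plurality ($\mathrm{Plu}$): each candidate $c$ gets score $s_{\mathrm{Plu}}(c,P)$ equal to the number (total weight) of voters ranking $c$ first; the winner is the candidate with the highest score, ties broken by an arbitrary fixed tie-breaking rule (the result holds for any such rule). CM: the rule $f$ is coalitionally manipulable in a discrete profile $P$ if there is a discrete profile $Q$ with the same candidates and voters such that $f(Q)\ne f(P)$ and every voter $v$ with $Q_v\ne P_v$ prefers $f(Q)$ to $f(P)$ according to $P_v$. Perturbed Culture with parameters $m,n\ge1$, $\theta\in(0,1]$: a random discrete profile with candidates $\{1,\dots,m\}$ and voters $\{1,\dots,n\}$, each voter independently having ranking $1\succ 2\succ\cdots\succ m$ with probability $\theta$ and a uniformly random ranking (among the $m!$) with probability $1-\theta$. The CM rate $\rho(f,m,n,\theta)$ is the probability that $f$ is CM in such a random profile. *)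

theory Defs
  imports Complex_Main "HOL-Combinatorics.Multiset_Permutations"
begin

text \<open>Candidates are 1..m. A ranking is a list enumerating all candidates without
repetition; earlier position = more preferred.\<close>

definition rankings :: "nat \<Rightarrow> nat list set" where
  "rankings m = permutations_of_set {1..m}"

definition prefers :: "nat list \<Rightarrow> nat \<Rightarrow> nat \<Rightarrow> bool" where
  "prefers r a b \<longleftrightarrow> (\<exists>i j. i < j \<and> j < length r \<and> r ! i = a \<and> r ! j = b)"

definition profiles :: "nat \<Rightarrow> nat \<Rightarrow> nat list list set" where
  "profiles m n = {P. length P = n \<and> set P \<subseteq> rankings m}"

definition plu_score :: "nat list list \<Rightarrow> nat \<Rightarrow> nat" where
  "plu_score P c = length (filter (\<lambda>r. hd r = c) P)"

definition plu_winner :: "nat list \<Rightarrow> nat list list \<Rightarrow> nat" where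
  "plu_winner tb P =
     hd (filter (\<lambda>c. \<forall>d \<in> set tb. plu_score P d \<le> plu_score P c) tb)"

definition coal_manip :: "(nat list list \<Rightarrow> nat) \<Rightarrow> nat \<Rightarrow> nat list list \<Rightarrow> bool" where
  "coal_manip f m P \<longleftrightarrow>
     (\<exists>Q \<in> profiles m (length P). f Q \<noteq> f P \<and>
        (\<forall>v < length P. Q ! v \<noteq> P ! v \<longrightarrow> prefers (P ! v) (f Q) (f P)))"

definition pc_weight :: "nat \<Rightarrow> real \<Rightarrow> nat list \<Rightarrow> real" where
  "pc_weight m \<theta> r = (if r = [1..<m+1] then \<theta> else 0) + (1 - \<theta>) / fact m"

definition cm_rate :: "(nat list list \<Rightarrow> nat) \<Rightarrow> nat \<Rightarrow> nat \<Rightarrow> real \<Rightarrow> real" where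
  "cm_rate f m n \<theta> =
     (\<Sum>P \<in> {P \<in> profiles m n. coal_manip f m P}. \<Prod>v<n. pc_weight m \<theta> (P ! v))"

definition theta_c_plu :: "nat \<Rightarrow> real" where
  "theta_c_plu m = (real m - 2) / (3 * real m - 2)"

end

theory Submission
  imports Defs
begin

text \<open>Under perturbed culture the voters' rankings are i.i.d., so the plurality scores and
  the numbers of voters preferring a candidate \<open>c\<close> to candidate 1 are sums of i.i.d.
  indicators, and by Chebyshev's inequality any fixed difference of two such counts has, with
  probability tending to 1, the sign of its mean. The means are \<open>\<theta> + (1 - \<theta>)/m\<close> for the
  score of 1, \<open>(1 - \<theta>)/m\<close> for the score of \<open>c \<noteq> 1\<close>, and \<open>(1 - \<theta>)/2\<close> for the number
  of voters preferring \<open>c\<close> to 1. So 1 wins, and the only useful coalitions are the voters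
  preferring some \<open>c\<close> to 1: they can elect \<open>c\<close> when they outnumber the voters of 1, and
  cannot when, for every \<open>c\<close>, they are fewer. The threshold \<open>(m - 2)/(3m - 2)\<close> is exactly
  where \<open>\<theta> + (1 - \<theta>)/m = (1 - \<theta>)/2\<close>.\<close>

definition lists_of_length :: "'a set \<Rightarrow> nat \<Rightarrow> 'a list set" where
  "lists_of_length R n = {P. length P = n \<and> set P \<subseteq> R}"

definition iid_expect :: "'a set \<Rightarrow> ('a \<Rightarrow> real) \<Rightarrow> nat \<Rightarrow> ('a list \<Rightarrow> real) \<Rightarrow> real" where
  "iid_expect R w n F = (\<Sum>P\<in>lists_of_length R n. (\<Prod>v<n. w (P ! v)) * F P)"

definition iid_prob :: "'a set \<Rightarrow> ('a \<Rightarrow> real) \<Rightarrow> nat \<Rightarrow> ('a list \<Rightarrow> bool) \<Rightarrow> real" where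
  "iid_prob R w n A = iid_expect R w n (\<lambda>P. of_bool (A P))"

lemma finite_lists_of_length: "finite R \<Longrightarrow> finite (lists_of_length R n)"
  unfolding lists_of_length_def using finite_lists_length_eq[of R n] by (simp add: conj_commute)

lemma lists_of_length_0: "lists_of_length R 0 = {[]}"
  by (auto simp: lists_of_length_def)

lemma lists_of_length_Suc: "lists_of_length R (Suc n) = (\<lambda>(r, P). r # P) ` (R \<times> lists_of_length R n)"
proof (rule set_eqI)
  show "Q \<in> lists_of_length R (Suc n) \<longleftrightarrow> Q \<in> (\<lambda>(r, P). r # P) ` (R \<times> lists_of_length R n)" for Q
    by (cases Q) (auto simp: lists_of_length_def image_iff)
qed

lemma iid_expect_0: "iid_expect R w 0 F = F []"
  by (simp add: iid_expect_def lists_of_length_0)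

lemma iid_expect_Suc:
  assumes "finite R"
  shows "iid_expect R w (Suc n) F = (\<Sum>r\<in>R. w r * iid_expect R w n (\<lambda>P. F (r # P)))"
proof -
  have inj: "inj_on (\<lambda>(r, P). r # P) (R \<times> lists_of_length R n)"
    by (auto simp: inj_on_def)
  have "iid_expect R w (Suc n) F
      = (\<Sum>(r, P)\<in>R \<times> lists_of_length R n. (\<Prod>v<Suc n. w ((r # P) ! v)) * F (r # P))"
    unfolding iid_expect_def lists_of_length_Suc sum.reindex[OF inj] by (simp add: case_prod_unfold)
  also have "\<dots> = (\<Sum>r\<in>R. \<Sum>P\<in>lists_of_length R n. (\<Prod>v<Suc n. w ((r # P) ! v)) * F (r # P))"
    by (rule sum.cartesian_product[symmetric])
  also have "\<dots> = (\<Sum>r\<in>R. w r * iid_expect R w n (\<lambda>P. F (r # P)))"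
    unfolding iid_expect_def prod.lessThan_Suc_shift by (simp add: sum_distrib_left mult.assoc)
  finally show ?thesis .
qed

lemma iid_expect_add: "iid_expect R w n (\<lambda>P. F P + G P) = iid_expect R w n F + iid_expect R w n G"
  unfolding iid_expect_def by (simp add: distrib_left sum.distrib)

lemma iid_expect_diff: "iid_expect R w n (\<lambda>P. F P - G P) = iid_expect R w n F - iid_expect R w n G"
  unfolding iid_expect_def by (simp add: right_diff_distrib sum_subtractf)

lemma iid_expect_cmult: "iid_expect R w n (\<lambda>P. c * F P) = c * iid_expect R w n F"
  unfolding iid_expect_def by (simp add: sum_distrib_left mult.left_commute)

lemma iid_expect_sum: "iid_expect R w n (\<lambda>P. \<Sum>i\<in>I. F i P) = (\<Sum>i\<in>I. iid_expect R w n (F i))"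
  unfolding iid_expect_def by (simp add: sum_distrib_left sum.swap[of _ I])

locale prob_weights =
  fixes R :: "'a set" and w :: "'a \<Rightarrow> real"
  assumes finite_R: "finite R"
    and weight_nonneg: "r \<in> R \<Longrightarrow> 0 \<le> w r"
    and sum_weights: "sum w R = 1"
begin

lemma iid_expect_const: "iid_expect R w n (\<lambda>_. c) = c"
  by (induction n) (simp_all add: iid_expect_0 iid_expect_Suc finite_R sum_weights
      flip: sum_distrib_right)

lemma iid_expect_mono:
  assumes "\<And>P. P \<in> lists_of_length R n \<Longrightarrow> F P \<le> G P"
  shows "iid_expect R w n F \<le> iid_expect R w n G"
  unfolding iid_expect_def
proof (intro sum_mono mult_left_mono)
  fix P assume P: "P \<in> lists_of_length R n"
  then show "F P \<le> G P" by (rule assms)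
  show "0 \<le> (\<Prod>v<n. w (P ! v))"
    using P by (intro prod_nonneg weight_nonneg) (auto simp: lists_of_length_def)
qed

lemma iid_prob_nonneg: "0 \<le> iid_prob R w n A"
  using iid_expect_mono[of n "\<lambda>_. 0" "\<lambda>P. of_bool (A P)"] by (simp add: iid_prob_def iid_expect_const)

lemma iid_prob_le_1: "iid_prob R w n A \<le> 1"
  using iid_expect_mono[of n "\<lambda>P. of_bool (A P)" "\<lambda>_. 1"] by (simp add: iid_prob_def iid_expect_const)

lemma iid_prob_compl: "iid_prob R w n (\<lambda>P. \<not> A P) = 1 - iid_prob R w n A"
  using iid_expect_diff[of R w n "\<lambda>_. 1" "\<lambda>P. of_bool (A P)"]
  by (simp add: iid_prob_def iid_expect_const of_bool_not_iff)

lemma iid_expect_centered_sum: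
  assumes "\<mu> = (\<Sum>r\<in>R. w r * g r)"
  shows "iid_expect R w n (\<lambda>P. \<Sum>r\<leftarrow>P. g r - \<mu>) = 0"
proof (induction n)
  case (Suc n)
  have "iid_expect R w (Suc n) (\<lambda>P. \<Sum>r\<leftarrow>P. g r - \<mu>) = (\<Sum>r\<in>R. w r * (g r - \<mu>))"
    by (simp add: iid_expect_Suc finite_R iid_expect_add iid_expect_const Suc)
  also have "\<dots> = 0"
    by (simp add: assms right_diff_distrib sum_subtractf sum_weights flip: sum_distrib_right)
  finally show ?case .
qed (simp add: iid_expect_0)

lemma iid_expect_centered_sum_square:
  assumes "\<mu> = (\<Sum>r\<in>R. w r * g r)"
  shows "iid_expect R w n (\<lambda>P. (\<Sum>r\<leftarrow>P. g r - \<mu>)\<^sup>2) = real n * (\<Sum>r\<in>R. w r * (g r - \<mu>)\<^sup>2)"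
proof (induction n)
  case (Suc n)
  define V where "V = (\<Sum>r\<in>R. w r * (g r - \<mu>)\<^sup>2)"
  have "iid_expect R w (Suc n) (\<lambda>P. (\<Sum>r\<leftarrow>P. g r - \<mu>)\<^sup>2)
      = (\<Sum>r\<in>R. w r * iid_expect R w n (\<lambda>P. (g r - \<mu>)\<^sup>2
          + (2 * (g r - \<mu>) * (\<Sum>r\<leftarrow>P. g r - \<mu>) + (\<Sum>r\<leftarrow>P. g r - \<mu>)\<^sup>2)))"
    by (simp add: iid_expect_Suc finite_R power2_eq_square algebra_simps)
  also have "\<dots> = (\<Sum>r\<in>R. w r * ((g r - \<mu>)\<^sup>2 + real n * V))"
    by (simp add: iid_expect_add iid_expect_cmult iid_expect_const
        iid_expect_centered_sum[OF assms] Suc V_def)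
  also have "\<dots> = real (Suc n) * V"
    by (simp add: distrib_left sum.distrib V_def algebra_simps sum_weights
        flip: sum_distrib_left sum_distrib_right)
  finally show ?case by (simp add: V_def)
qed (simp add: iid_expect_0)

text \<open>Chebyshev: a nonpositive sum deviates from its mean \<open>n \<mu>\<close> by at least \<open>n \<mu>\<close>.\<close>

lemma iid_prob_sum_nonpos_le:
  assumes "\<mu> = (\<Sum>r\<in>R. w r * g r)" "0 < \<mu>" "0 < n"
  shows "iid_prob R w n (\<lambda>P. (\<Sum>r\<leftarrow>P. g r) \<le> 0) \<le> (\<Sum>r\<in>R. w r * (g r - \<mu>)\<^sup>2) / \<mu>\<^sup>2 / real n"
proof -
  define t where "t = real n * \<mu>"
  have t: "0 < t" using assms by (simp add: t_def)
  have "iid_prob R w n (\<lambda>P. (\<Sum>r\<leftarrow>P. g r) \<le> 0)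
      \<le> iid_expect R w n (\<lambda>P. 1 / t\<^sup>2 * (\<Sum>r\<leftarrow>P. g r - \<mu>)\<^sup>2)"
    unfolding iid_prob_def
  proof (rule iid_expect_mono)
    fix P assume P: "P \<in> lists_of_length R n"
    show "of_bool ((\<Sum>r\<leftarrow>P. g r) \<le> 0) \<le> 1 / t\<^sup>2 * (\<Sum>r\<leftarrow>P. g r - \<mu>)\<^sup>2"
    proof (cases "(\<Sum>r\<leftarrow>P. g r) \<le> 0")
      case True
      then have "(\<Sum>r\<leftarrow>P. g r - \<mu>) \<le> - t"
        using P by (simp add: sum_list_subtractf sum_list_triv lists_of_length_def t_def)
      then have "t\<^sup>2 \<le> (\<Sum>r\<leftarrow>P. g r - \<mu>)\<^sup>2"
        using t power_mono[of t "- (\<Sum>r\<leftarrow>P. g r - \<mu>)" 2] by simp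
      then show ?thesis using True t by (simp add: field_simps)
    qed simp
  qed
  also have "\<dots> = 1 / t\<^sup>2 * (real n * (\<Sum>r\<in>R. w r * (g r - \<mu>)\<^sup>2))"
    by (simp only: iid_expect_cmult iid_expect_centered_sum_square[OF assms(1)])
  also have "\<dots> = (\<Sum>r\<in>R. w r * (g r - \<mu>)\<^sup>2) / \<mu>\<^sup>2 / real n"
    using assms by (simp add: t_def power2_eq_square)
  finally show ?thesis .
qed

lemma iid_prob_sum_nonpos_tendsto_0:
  assumes "0 < (\<Sum>r\<in>R. w r * g r)"
  shows "(\<lambda>n. iid_prob R w n (\<lambda>P. (\<Sum>r\<leftarrow>P. g r) \<le> 0)) \<longlonglongrightarrow> 0"
proof (rule tendsto_sandwich[of "\<lambda>_. 0"])
  define \<mu> where "\<mu> = (\<Sum>r\<in>R. w r * g r)"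
  show "\<forall>\<^sub>F n in sequentially. iid_prob R w n (\<lambda>P. (\<Sum>r\<leftarrow>P. g r) \<le> 0)
      \<le> (\<Sum>r\<in>R. w r * (g r - \<mu>)\<^sup>2) / \<mu>\<^sup>2 / real n"
    using eventually_gt_at_top[of 0]
    by eventually_elim (rule iid_prob_sum_nonpos_le, use assms in \<open>simp_all add: \<mu>_def\<close>)
  show "(\<lambda>n. (\<Sum>r\<in>R. w r * (g r - \<mu>)\<^sup>2) / \<mu>\<^sup>2 / real n) \<longlonglongrightarrow> 0"
    by (rule lim_const_over_n)
qed (simp_all add: iid_prob_nonneg)

text \<open>Union bound over the finitely many statistics in \<open>G\<close>.\<close>

lemma iid_prob_tendsto_1:
  assumes "finite G" and mean_pos: "\<And>g. g \<in> G \<Longrightarrow> 0 < (\<Sum>r\<in>R. w r * g r)"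
    and sums_pos_imp: "\<And>n P. P \<in> lists_of_length R n \<Longrightarrow> \<forall>g\<in>G. 0 < (\<Sum>r\<leftarrow>P. g r) \<Longrightarrow> A P"
  shows "(\<lambda>n. iid_prob R w n A) \<longlonglongrightarrow> 1"
proof (rule tendsto_sandwich[where h = "\<lambda>_. 1"])
  define bad where "bad n = (\<Sum>g\<in>G. iid_prob R w n (\<lambda>P. (\<Sum>r\<leftarrow>P. g r) \<le> 0))" for n
  have "bad \<longlonglongrightarrow> 0"
    unfolding bad_def by (intro tendsto_null_sum iid_prob_sum_nonpos_tendsto_0 mean_pos)
  then show "(\<lambda>n. 1 - bad n) \<longlonglongrightarrow> 1"
    using tendsto_diff[OF tendsto_const[of 1]] by fastforce
  have "1 - bad n \<le> iid_prob R w n A" for n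
  proof -
    have "iid_expect R w n (\<lambda>P. 1 - (\<Sum>g\<in>G. of_bool ((\<Sum>r\<leftarrow>P. g r) \<le> 0))) \<le> iid_prob R w n A"
      unfolding iid_prob_def
    proof (rule iid_expect_mono)
      fix P assume P: "P \<in> lists_of_length R n"
      show "1 - (\<Sum>g\<in>G. of_bool ((\<Sum>r\<leftarrow>P. g r) \<le> 0)) \<le> (of_bool (A P) :: real)"
      proof (cases "A P")
        case False
        then obtain g where "g \<in> G" "(\<Sum>r\<leftarrow>P. g r) \<le> 0"
          using sums_pos_imp[OF P] by force
        then have "1 \<le> (\<Sum>g\<in>G. of_bool ((\<Sum>r\<leftarrow>P. g r) \<le> 0) :: real)"
          using member_le_sum[of g G "\<lambda>g. of_bool ((\<Sum>r\<leftarrow>P. g r) \<le> 0) :: real"] \<open>finite G\<close>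
          by simp
        with False show ?thesis by simp
      qed (simp add: sum_nonneg)
    qed
    then show ?thesis
      by (simp add: bad_def iid_expect_diff iid_expect_const iid_expect_sum iid_prob_def)
  qed
  then show "\<forall>\<^sub>F n in sequentially. 1 - bad n \<le> iid_prob R w n A"
    by simp
qed (simp_all add: iid_prob_le_1)

end

lemma rankings_iff: "r \<in> rankings m \<longleftrightarrow> distinct r \<and> set r = {1..m}"
  by (auto simp: rankings_def permutations_of_set_def)

lemma id_ranking: "[1..<m+1] \<in> rankings m"
  by (auto simp: rankings_iff)

lemma rev_in_rankings_iff [simp]: "rev r \<in> rankings m \<longleftrightarrow> r \<in> rankings m"
  by (simp add: rankings_iff)

lemma finite_rankings: "finite (rankings m)"
  by (simp add: rankings_def)

lemma card_rankings: "card (rankings m) = fact m"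
  by (simp add: rankings_def)

lemma prefers_asym:
  assumes "distinct r" "prefers r a b"
  shows "\<not> prefers r b a"
proof
  assume "prefers r b a"
  with assms obtain i j k l where "i < j" "j < length r" "r ! i = a" "r ! j = b"
    and "k < l" "l < length r" "r ! k = b" "r ! l = a"
    unfolding prefers_def by blast
  moreover from this have "i = l" "j = k"
    using nth_eq_iff_index_eq[OF assms(1), of i l] nth_eq_iff_index_eq[OF assms(1), of j k] by auto
  ultimately show False by simp
qed

lemma prefers_total:
  assumes "a \<in> set r" "b \<in> set r" "a \<noteq> b"
  shows "prefers r a b \<or> prefers r b a"
proof -
  obtain i j where ij: "i < length r" "r ! i = a" "j < length r" "r ! j = b"
    using assms(1,2) by (auto simp: in_set_conv_nth)
  with assms(3) consider "i < j" | "j < i" by fastforce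
  then show ?thesis
    unfolding prefers_def using ij by cases blast+
qed

lemma not_prefers_hd:
  assumes "distinct r"
  shows "\<not> prefers r b (hd r)"
proof
  assume "prefers r b (hd r)"
  then obtain i j where j: "i < j" "j < length r" "r ! j = hd r"
    unfolding prefers_def by blast
  have "r \<noteq> []" using j(2) by auto
  moreover from this have "r ! j \<noteq> r ! 0"
    using nth_eq_iff_index_eq[OF assms j(2), of 0] j(1) by simp
  ultimately show False
    using j(3) by (simp add: hd_conv_nth)
qed

lemma prefers_hd:
  assumes "b \<in> set r" "b \<noteq> hd r"
  shows "prefers r (hd r) b"
proof -
  obtain j where j: "j < length r" "r ! j = b"
    using assms(1) by (auto simp: in_set_conv_nth)
  have "r \<noteq> []" using assms(1) by auto
  have "j \<noteq> 0"
  proof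
    assume "j = 0"
    with j \<open>r \<noteq> []\<close> have "b = hd r" by (simp add: hd_conv_nth)
    with assms(2) show False ..
  qed
  with j \<open>r \<noteq> []\<close> show ?thesis
    unfolding prefers_def by (intro exI[of _ 0] exI[of _ j]) (simp add: hd_conv_nth)
qed

lemma prefers_rev_if: "prefers r b a \<Longrightarrow> prefers (rev r) a b"
  unfolding prefers_def
proof (elim exE conjE)
  fix i j assume "i < j" "j < length r" "r ! i = b" "r ! j = a"
  then have "length r - Suc j < length r - Suc i" "length r - Suc i < length (rev r)"
    "rev r ! (length r - Suc j) = a" "rev r ! (length r - Suc i) = b"
    by (simp_all add: rev_nth)
  then show "\<exists>i' j'. i' < j' \<and> j' < length (rev r) \<and> rev r ! i' = a \<and> rev r ! j' = b"
    by blast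
qed

lemma prefers_rev: "prefers (rev r) a b \<longleftrightarrow> prefers r b a"
  using prefers_rev_if[of r b a] prefers_rev_if[of "rev r" a b] by auto

lemma rankings_with_hd:
  assumes "c \<in> {1..m}"
  shows "{r \<in> rankings m. hd r = c} = (#) c ` permutations_of_set ({1..m} - {c})"
proof (intro set_eqI iffI)
  fix r assume "r \<in> {r \<in> rankings m. hd r = c}"
  then have r: "distinct r" "set r = {1..m}" "hd r = c"
    by (simp_all add: rankings_iff)
  then have "r \<noteq> []" using assms by auto
  with r(3) obtain t where t: "r = c # t" by (cases r) auto
  with r(1) have "distinct t" "set t = set r - {c}"
    by auto
  then have "t \<in> permutations_of_set ({1..m} - {c})"
    unfolding r(2) by (rule permutations_of_setI[rotated])
  with t show "r \<in> (#) c ` permutations_of_set ({1..m} - {c})"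
    by blast
next
  fix r assume "r \<in> (#) c ` permutations_of_set ({1..m} - {c})"
  then obtain t where "r = c # t" "distinct t" "set t = {1..m} - {c}"
    by (auto dest: permutations_of_setD)
  with assms show "r \<in> {r \<in> rankings m. hd r = c}"
    by (simp add: rankings_iff insert_absorb)
qed

lemma card_rankings_with_hd:
  assumes "c \<in> {1..m}"
  shows "card {r \<in> rankings m. hd r = c} = fact (m - 1)"
  using assms by (simp add: rankings_with_hd card_image)

lemma ex_ranking_with_hd:
  assumes "c \<in> {1..m}"
  obtains r where "r \<in> rankings m" "hd r = c"
  using rankings_with_hd[OF assms] permutations_of_set_empty_iff[of "{1..m} - {c}"] by blast

text \<open>Reversal is a bijection between the rankings with \<open>b \<succ> a\<close> and those with \<open>a \<succ> b\<close>.\<close>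

lemma card_rankings_prefers:
  assumes "a \<in> {1..m}" "b \<in> {1..m}" "a \<noteq> b"
  shows "2 * card {r \<in> rankings m. prefers r a b} = fact m"
proof -
  let ?A = "{r \<in> rankings m. prefers r a b}" and ?B = "{r \<in> rankings m. prefers r b a}"
  have "bij_betw rev ?B ?A"
    by (rule bij_betw_byWitness[where f' = rev]) (auto simp: prefers_rev)
  then have "card ?B = card ?A"
    by (rule bij_betw_same_card)
  have "prefers r a b \<or> prefers r b a" if "r \<in> rankings m" for r
    using that assms by (intro prefers_total) (auto simp: rankings_iff)
  then have "?A \<union> ?B = rankings m"
    by auto
  moreover have "card (?A \<union> ?B) = card ?A + card ?B"
  proof (rule card_Un_disjoint)
    show "?A \<inter> ?B = {}"
      using prefers_asym by (auto simp: rankings_iff)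
  qed (simp_all add: finite_rankings)
  ultimately have "card (rankings m) = card ?A + card ?B"
    by simp
  with \<open>card ?B = card ?A\<close> show ?thesis
    by (simp add: card_rankings)
qed

lemma plu_winner_max:
  assumes "tb \<noteq> []"
  shows plu_winner_in_set: "plu_winner tb P \<in> set tb"
    and plu_score_le_plu_winner: "d \<in> set tb \<Longrightarrow> plu_score P d \<le> plu_score P (plu_winner tb P)"
proof -
  let ?maximal = "\<lambda>c. \<forall>d \<in> set tb. plu_score P d \<le> plu_score P c"
  have "Max (plu_score P ` set tb) \<in> plu_score P ` set tb"
    using assms by (intro Max_in) auto
  then obtain c where "c \<in> set tb" "plu_score P c = Max (plu_score P ` set tb)"
    by auto
  then have "c \<in> set (filter ?maximal tb)"
    by simp
  then have "filter ?maximal tb \<noteq> []"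
    by (metis empty_iff list.set(1))
  then have "plu_winner tb P \<in> set (filter ?maximal tb)"
    unfolding plu_winner_def by (rule hd_in_set)
  then show "plu_winner tb P \<in> set tb" "d \<in> set tb \<Longrightarrow> plu_score P d \<le> plu_score P (plu_winner tb P)"
    by auto
qed

lemma plu_winner_eqI:
  assumes "tb \<in> rankings m" "c \<in> {1..m}"
    and "\<And>d. d \<in> {1..m} \<Longrightarrow> d \<noteq> c \<Longrightarrow> plu_score P d < plu_score P c"
  shows "plu_winner tb P = c"
proof (rule ccontr)
  assume "plu_winner tb P \<noteq> c"
  have tb: "set tb = {1..m}" "tb \<noteq> []"
    using assms(1,2) by (auto simp: rankings_iff)
  then have "plu_winner tb P \<in> {1..m}"
    using plu_winner_in_set by blast
  with assms(3) \<open>plu_winner tb P \<noteq> c\<close> have "plu_score P (plu_winner tb P) < plu_score P c"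
    by blast
  moreover have "plu_score P c \<le> plu_score P (plu_winner tb P)"
    using plu_score_le_plu_winner tb assms(2) by blast
  ultimately show False
    by simp
qed

lemma plu_score_conv_card: "plu_score P c = card {v. v < length P \<and> hd (P ! v) = c}"
  unfolding plu_score_def by (rule length_filter_conv_card)

text \<open>Voters ranking 1 first never join a coalition, so 1 keeps its score, while the new
  winner can only collect the votes of the voters preferring it to 1.\<close>

lemma not_coal_manip_plu:
  assumes "1 \<le> m" "tb \<in> rankings m" "P \<in> profiles m n"
    and leads: "\<And>c. c \<in> {2..m} \<Longrightarrow> plu_score P c < plu_score P 1"
    and few_prefer: "\<And>c. c \<in> {2..m} \<Longrightarrow> length (filter (\<lambda>r. prefers r c 1) P) < plu_score P 1"
  shows "\<not> coal_manip (plu_winner tb) m P"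
proof
  have winner_P: "plu_winner tb P = 1"
    using assms(1) leads by (intro plu_winner_eqI[OF assms(2)]) auto
  assume "coal_manip (plu_winner tb) m P"
  then obtain Q where Q: "Q \<in> profiles m (length P)" "plu_winner tb Q \<noteq> 1"
    and deviators: "\<And>v. v < length P \<Longrightarrow> Q ! v \<noteq> P ! v \<Longrightarrow> prefers (P ! v) (plu_winner tb Q) 1"
    unfolding coal_manip_def winner_P by blast
  define c where "c = plu_winner tb Q"
  have tb: "set tb = {1..m}" "tb \<noteq> []"
    using assms(1,2) by (auto simp: rankings_iff)
  then have c: "c \<in> {2..m}"
    using plu_winner_in_set[of tb Q] Q(2) unfolding c_def by fastforce
  have len_Q: "length Q = length P"
    using Q(1) by (simp add: profiles_def)
  have P_rankings: "P ! v \<in> rankings m" if "v < length P" for v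
    using assms(3) that by (auto simp: profiles_def)
  have "plu_score Q c \<le> length (filter (\<lambda>r. prefers r c 1) P)"
    unfolding plu_score_conv_card length_filter_conv_card
  proof (rule card_mono)
    show "{v. v < length Q \<and> hd (Q ! v) = c} \<subseteq> {v. v < length P \<and> prefers (P ! v) c 1}"
    proof (intro subsetI, elim CollectE conjE, intro CollectI conjI)
      fix v assume v: "v < length Q" "hd (Q ! v) = c"
      then show "v < length P"
        using len_Q by simp
      show "prefers (P ! v) c 1"
      proof (cases "Q ! v = P ! v")
        case True
        then show ?thesis
          using v c len_Q P_rankings[of v] assms(1) by (auto intro: prefers_hd simp: rankings_iff)
      qed (use v len_Q deviators c_def in auto)
    qed
  qed simp
  moreover have "plu_score P 1 \<le> plu_score Q 1"
    unfolding plu_score_conv_card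
  proof (rule card_mono)
    show "{v. v < length P \<and> hd (P ! v) = 1} \<subseteq> {v. v < length Q \<and> hd (Q ! v) = 1}"
    proof (intro subsetI, elim CollectE conjE, intro CollectI conjI)
      fix v assume v: "v < length P" "hd (P ! v) = 1"
      then have "Q ! v = P ! v"
        using deviators[of v] not_prefers_hd[of "P ! v"] P_rankings[of v] by (auto simp: rankings_iff)
      with v len_Q show "v < length Q" "hd (Q ! v) = 1"
        by simp_all
    qed
  qed simp
  moreover have "plu_score Q 1 \<le> plu_score Q c"
    using plu_score_le_plu_winner[OF tb(2)] tb(1) assms(1) unfolding c_def by simp
  ultimately show False
    using few_prefer[OF c] by linarith
qed

text \<open>The coalition: all voters preferring 2 to 1 switch to a ranking with 2 on top.\<close>

lemma coal_manip_plu: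
  assumes "2 \<le> m" "tb \<in> rankings m" "P \<in> profiles m n"
    and leads: "\<And>c. c \<in> {2..m} \<Longrightarrow> plu_score P c < plu_score P 1"
    and many_prefer: "plu_score P 1 < length (filter (\<lambda>r. prefers r 2 1) P)"
  shows "coal_manip (plu_winner tb) m P"
proof -
  obtain r2 where r2: "r2 \<in> rankings m" "hd r2 = 2"
    using ex_ranking_with_hd[of 2 m] assms(1) by auto
  define Q where "Q = map (\<lambda>r. if prefers r 2 1 then r2 else r) P"
  have len_Q: "length Q = length P"
    by (simp add: Q_def)
  have Q_nth: "Q ! v = (if prefers (P ! v) 2 1 then r2 else P ! v)" if "v < length P" for v
    using that by (simp add: Q_def)
  have Q_profile: "Q \<in> profiles m (length P)"
    using assms(3) r2 by (auto simp: Q_def profiles_def)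
  have winner_P: "plu_winner tb P = 1"
    using assms(1) leads by (intro plu_winner_eqI[OF assms(2)]) auto
  have score_Q_2: "length (filter (\<lambda>r. prefers r 2 1) P) \<le> plu_score Q 2"
    unfolding plu_score_conv_card length_filter_conv_card
    by (rule card_mono) (auto simp: len_Q Q_nth r2)
  have score_Q_other: "plu_score Q d \<le> plu_score P d" if "d \<noteq> 2" for d
    unfolding plu_score_conv_card
    by (rule card_mono) (use that r2 in \<open>auto simp: len_Q Q_nth split: if_splits\<close>)
  have "plu_winner tb Q = 2"
  proof (rule plu_winner_eqI[OF assms(2)])
    fix d assume d: "d \<in> {1..m}" "d \<noteq> 2"
    have "plu_score P d \<le> plu_score P 1"
      using leads d by (cases "d = 1") (auto intro: less_imp_le)
    then show "plu_score Q d < plu_score Q 2"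
      using score_Q_2 score_Q_other[OF d(2)] many_prefer by linarith
  qed (use assms(1) in simp)
  then show ?thesis
    unfolding coal_manip_def winner_P by (intro bexI[OF _ Q_profile]) (auto simp: Q_nth)
qed

lemma sum_pc_weight:
  assumes "finite A"
  shows "(\<Sum>r\<in>A. pc_weight m \<theta> r) = \<theta> * of_bool ([1..<m+1] \<in> A) + (1 - \<theta>) / fact m * card A"
  using assms by (simp add: pc_weight_def sum.distrib)

lemma pc_mean_indicator:
  "(\<Sum>r\<in>rankings m. pc_weight m \<theta> r * of_bool (p r))
    = \<theta> * of_bool (p [1..<m+1]) + (1 - \<theta>) / fact m * card {r \<in> rankings m. p r}"
proof -
  have "(\<Sum>r\<in>rankings m. pc_weight m \<theta> r * of_bool (p r)) = (\<Sum>r\<in>{r \<in> rankings m. p r}. pc_weight m \<theta> r)"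
    by (simp add: finite_rankings Collect_conj_eq)
  also have "\<dots> = \<theta> * of_bool ([1..<m+1] \<in> {r \<in> rankings m. p r}) + (1 - \<theta>) / fact m * card {r \<in> rankings m. p r}"
    by (rule sum_pc_weight) (simp add: finite_rankings)
  finally show ?thesis
    using id_ranking[of m] by simp
qed

lemma prob_weights_pc_weight:
  assumes "0 \<le> \<theta>" "\<theta> \<le> 1"
  shows "prob_weights (rankings m) (pc_weight m \<theta>)"
proof
  show "finite (rankings m)"
    by (rule finite_rankings)
  show "0 \<le> pc_weight m \<theta> r" for r
    using assms by (simp add: pc_weight_def)
  show "sum (pc_weight m \<theta>) (rankings m) = 1"
    using pc_mean_indicator[of m \<theta> "\<lambda>_. True"] by (simp add: card_rankings)
qed

lemma pc_mean_hd:
  assumes "c \<in> {1..m}"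
  shows "(\<Sum>r\<in>rankings m. pc_weight m \<theta> r * of_bool (hd r = c)) = \<theta> * of_bool (c = 1) + (1 - \<theta>) / m"
proof -
  have "hd [1..<m+1] = 1"
    using assms by (simp add: upt_conv_Cons del: upt_Suc)
  moreover have "fact m = real m * fact (m - 1)"
    using assms by (intro fact_reduce) auto
  ultimately show ?thesis
    using assms by (auto simp: pc_mean_indicator card_rankings_with_hd simp del: upt_Suc)
qed

lemma pc_mean_prefers:
  assumes "a < b" "a \<in> {1..m}" "b \<in> {1..m}"
  shows "(\<Sum>r\<in>rankings m. pc_weight m \<theta> r * of_bool (prefers r b a)) = (1 - \<theta>) / 2"
proof -
  have id_not_prefers: "\<not> prefers [1..<m+1] b a"
    using assms(1) unfolding prefers_def by (auto simp: nth_upt simp del: upt_Suc)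
  have "2 * card {r \<in> rankings m. prefers r b a} = fact m"
    using assms by (intro card_rankings_prefers) auto
  then have card_eq: "real (card {r \<in> rankings m. prefers r b a}) = fact m / 2"
    by (metis of_nat_fact of_nat_mult of_nat_numeral nonzero_mult_div_cancel_left zero_neq_numeral)
  show ?thesis
    unfolding pc_mean_indicator card_eq using id_not_prefers by simp
qed

lemma pc_mean_hd_lead:
  assumes "c \<in> {2..m}"
  shows "(\<Sum>r\<in>rankings m. pc_weight m \<theta> r * (of_bool (hd r = 1) - of_bool (hd r = c))) = \<theta>"
proof -
  have "1 \<in> {1..m}" "c \<in> {1..m}" "c \<noteq> 1"
    using assms by auto
  then show ?thesis
    by (simp add: right_diff_distrib sum_subtractf pc_mean_hd)
qed

lemma less_theta_c_plu_iff:
  assumes "2 \<le> m"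
  shows "\<theta> < theta_c_plu m \<longleftrightarrow> \<theta> + (1 - \<theta>) / m < (1 - \<theta>) / 2"
proof -
  have "0 < 3 * real m - 2" "0 < real m"
    using assms by auto
  then show ?thesis
    by (simp add: theta_c_plu_def field_simps)
qed

lemma theta_c_plu_less_iff:
  assumes "2 \<le> m"
  shows "theta_c_plu m < \<theta> \<longleftrightarrow> (1 - \<theta>) / 2 < \<theta> + (1 - \<theta>) / m"
proof -
  have "0 < 3 * real m - 2" "0 < real m"
    using assms by auto
  then show ?thesis
    by (simp add: theta_c_plu_def field_simps)
qed

lemma cm_rate_eq_iid_prob:
  "cm_rate f m n \<theta> = iid_prob (rankings m) (pc_weight m \<theta>) n (coal_manip f m)"
proof -
  have "profiles m n = lists_of_length (rankings m) n"
    by (simp add: profiles_def lists_of_length_def)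
  moreover have "finite (lists_of_length (rankings m) n)"
    by (simp add: finite_lists_of_length finite_rankings)
  ultimately show ?thesis
    by (simp add: cm_rate_def iid_prob_def iid_expect_def Collect_conj_eq)
qed

lemma sum_list_of_bool: "(\<Sum>r\<leftarrow>P. of_bool (p r)) = real (length (filter p P))"
  by (induction P) simp_all

lemma cm_rate_plu_tendsto_1:
  assumes "2 \<le> m" "0 < \<theta>" "\<theta> < theta_c_plu m" "tb \<in> rankings m"
  shows "(\<lambda>n. cm_rate (plu_winner tb) m n \<theta>) \<longlonglongrightarrow> 1"
proof -
  have "theta_c_plu m < 1"
    using assms(1) by (simp add: theta_c_plu_def)
  then interpret prob_weights "rankings m" "pc_weight m \<theta>"
    using assms(2,3) by (intro prob_weights_pc_weight) auto
  let ?top = "\<lambda>c r. of_bool (hd r = c) :: real"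
  define G where "G = insert (\<lambda>r. of_bool (prefers r 2 1) - ?top 1 r) ((\<lambda>c r. ?top 1 r - ?top c r) ` {2..m})"
  have mean_pos: "0 < (\<Sum>r\<in>rankings m. pc_weight m \<theta> r * g r)" if "g \<in> G" for g
  proof -
    from that consider "g = (\<lambda>r. of_bool (prefers r 2 1) - ?top 1 r)"
      | c where "c \<in> {2..m}" "g = (\<lambda>r. ?top 1 r - ?top c r)"
      unfolding G_def by blast
    then show ?thesis
    proof cases
      case 1
      have "(\<Sum>r\<in>rankings m. pc_weight m \<theta> r * g r) = (1 - \<theta>) / 2 - (\<theta> + (1 - \<theta>) / m)"
        using pc_mean_prefers[of 1 2 m \<theta>] pc_mean_hd[of 1 m \<theta>] assms(1)
        by (simp add: 1 right_diff_distrib sum_subtractf)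
      then show ?thesis
        using less_theta_c_plu_iff[OF assms(1)] assms(3) by simp
    qed (use pc_mean_hd_lead assms(2) in simp)
  qed
  have sums_pos_imp: "coal_manip (plu_winner tb) m P"
    if P: "P \<in> lists_of_length (rankings m) n" and sums_pos: "\<forall>g\<in>G. 0 < (\<Sum>r\<leftarrow>P. g r)" for n P
  proof (rule coal_manip_plu[OF assms(1,4)])
    show "P \<in> profiles m n"
      using P by (simp add: profiles_def lists_of_length_def)
    have "0 < (\<Sum>r\<leftarrow>P. of_bool (prefers r 2 1) - ?top 1 r)"
      using sums_pos unfolding G_def by simp
    then show "plu_score P 1 < length (filter (\<lambda>r. prefers r 2 1) P)"
      by (simp add: sum_list_subtractf sum_list_of_bool plu_score_def)
    fix c assume "c \<in> {2..m}"
    then have "0 < (\<Sum>r\<leftarrow>P. ?top 1 r - ?top c r)"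
      using sums_pos unfolding G_def by simp
    then show "plu_score P c < plu_score P 1"
      by (simp add: sum_list_subtractf sum_list_of_bool plu_score_def)
  qed
  have "(\<lambda>n. iid_prob (rankings m) (pc_weight m \<theta>) n (coal_manip (plu_winner tb) m)) \<longlonglongrightarrow> 1"
    by (rule iid_prob_tendsto_1[of G, OF _ mean_pos sums_pos_imp]) (simp add: G_def)
  then show ?thesis
    by (simp add: cm_rate_eq_iid_prob)
qed

lemma cm_rate_plu_tendsto_0:
  assumes "2 \<le> m" "theta_c_plu m < \<theta>" "\<theta> \<le> 1" "tb \<in> rankings m"
  shows "(\<lambda>n. cm_rate (plu_winner tb) m n \<theta>) \<longlonglongrightarrow> 0"
proof -
  have "0 \<le> theta_c_plu m"
    using assms(1) by (simp add: theta_c_plu_def)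
  then interpret prob_weights "rankings m" "pc_weight m \<theta>"
    using assms(2,3) by (intro prob_weights_pc_weight) auto
  let ?top = "\<lambda>c r. of_bool (hd r = c) :: real"
  define G where "G = (\<lambda>c r. ?top 1 r - ?top c r) ` {2..m} \<union> (\<lambda>c r. ?top 1 r - of_bool (prefers r c 1)) ` {2..m}"
  have mean_pos: "0 < (\<Sum>r\<in>rankings m. pc_weight m \<theta> r * g r)" if "g \<in> G" for g
  proof -
    from that consider c where "c \<in> {2..m}" "g = (\<lambda>r. ?top 1 r - ?top c r)"
      | c where "c \<in> {2..m}" "g = (\<lambda>r. ?top 1 r - of_bool (prefers r c 1))"
      unfolding G_def by blast
    then show ?thesis
    proof cases
      case (2 c)
      have "(\<Sum>r\<in>rankings m. pc_weight m \<theta> r * g r) = \<theta> + (1 - \<theta>) / m - (1 - \<theta>) / 2"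
        using pc_mean_prefers[of 1 c m \<theta>] pc_mean_hd[of 1 m \<theta>] 2(1)
        by (simp add: 2(2) right_diff_distrib sum_subtractf)
      then show ?thesis
        using theta_c_plu_less_iff[OF assms(1)] assms(2) by simp
    qed (use pc_mean_hd_lead assms(2) \<open>0 \<le> theta_c_plu m\<close> in simp)
  qed
  have sums_pos_imp: "\<not> coal_manip (plu_winner tb) m P"
    if P: "P \<in> lists_of_length (rankings m) n" and sums_pos: "\<forall>g\<in>G. 0 < (\<Sum>r\<leftarrow>P. g r)" for n P
  proof (rule not_coal_manip_plu[of m tb])
    show "P \<in> profiles m n"
      using P by (simp add: profiles_def lists_of_length_def)
    fix c assume "c \<in> {2..m}"
    then have "0 < (\<Sum>r\<leftarrow>P. ?top 1 r - ?top c r)" "0 < (\<Sum>r\<leftarrow>P. ?top 1 r - of_bool (prefers r c 1))"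
      using sums_pos unfolding G_def by auto
    then show "plu_score P c < plu_score P 1" "length (filter (\<lambda>r. prefers r c 1) P) < plu_score P 1"
      by (simp_all add: sum_list_subtractf sum_list_of_bool plu_score_def)
  qed (use assms in auto)
  have "(\<lambda>n. iid_prob (rankings m) (pc_weight m \<theta>) n (\<lambda>P. \<not> coal_manip (plu_winner tb) m P)) \<longlonglongrightarrow> 1"
    by (rule iid_prob_tendsto_1[of G, OF _ mean_pos sums_pos_imp]) (simp add: G_def)
  then have "(\<lambda>n. 1 - iid_prob (rankings m) (pc_weight m \<theta>) n (coal_manip (plu_winner tb) m)) \<longlonglongrightarrow> 1"
    by (simp add: iid_prob_compl)
  then show ?thesis
    using tendsto_diff[OF tendsto_const[of 1]] by (fastforce simp: cm_rate_eq_iid_prob)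
qed

theorem theorem3p3:
  fixes m :: nat and \<theta> :: real and tb :: "nat list"
  assumes "m \<ge> 2" and "0 < \<theta>" and "\<theta> \<le> 1" and "tb \<in> rankings m"
  shows "(\<theta> < theta_c_plu m \<longrightarrow> (\<lambda>n. cm_rate (plu_winner tb) m n \<theta>) \<longlonglongrightarrow> 1)
       \<and> (\<theta> > theta_c_plu m \<longrightarrow> (\<lambda>n. cm_rate (plu_winner tb) m n \<theta>) \<longlonglongrightarrow> 0)"
  using assms cm_rate_plu_tendsto_1 cm_rate_plu_tendsto_0 by blast

end
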